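(* Let $\mathbf v=(v_1,\dots,v_m)$ and $\mathbf k=(k_1,\dots,k_m)$ be $m$-tuples of positive integers with $\mathbf v\ge\mathbf k$, and let $\mathbf w=(w_1,\dots,w_n)$ and $\boldsymbol\ell=(\ell_1,\dots,\ell_n)$ be $n$-tuples of positive integers with $\mathbf w\ge\boldsymbol\ell$. Let $t$ be a positive integer. Suppose $\mathcal D_1$ is a ${\rm GC}(\mathbf v,\mathbf k,t)$ with $b$ blocks and $\mathcal D_2$ is a ${\rm GC}(\mathbf w,\boldsymbol\ell,t)$ with $c$ blocks. Then there exists a ${\rm GC}(\mathrm{cat}(\mathbf v,\mathbf w),\mathrm{cat}(\mathbf k,\boldsymbol\ell),t)$ with $bc$ blocks.
   Context: $\mathrm{cat}(\mathbf a,\mathbf b)$ denotes concatenation of tuples. For tuples $\mathbf a,\mathbf b$ of positive integers of the same length $p$ with $\mathbf b\le\mathbf a$ entrywise and $t\le\sum_i b_i$: let $Y_1,\dots,Y_p$ be pairwise disjoint sets with $|Y_i|=a_i$; a block is a $p$-tuple $(B_1,\dots,B_p)$ with $B_i\subseteq Y_i$, $|B_i|=b_i$; a $p$-tuple of sets $(T_1,\dots,T_p)$ is $(\mathbf a,\mathbf b,t)$-admissible if $T_i\subseteq Y_i$, $|T_i|\le b_i$ for all $i$ and $\sum|T_i|=t$, and is contained in a block if $T_i\subseteq B_i$ for all $i$. A generalized covering design ${\rm GC}(\mathbf a,\mathbf b,t)$ is a finite family (repetitions allowed) of blocks containing every admissible tuple in at least one block. *)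

theory Defs
  imports Main
begin

text \<open>The ground set Y_i of coordinate i is taken
  to be the canonical set {0..<a_i}; since blocks and admissible tuples are
  tuples of sets indexed by coordinate, the Y_i are disjoint in effect.\<close>

definition is_block :: "nat list \<Rightarrow> nat list \<Rightarrow> nat set list \<Rightarrow> bool" where
  "is_block a b B \<longleftrightarrow> length B = length a \<and>
     (\<forall>i<length a. B ! i \<subseteq> {0..<a ! i} \<and> card (B ! i) = b ! i)"

definition admissible :: "nat list \<Rightarrow> nat list \<Rightarrow> nat \<Rightarrow> nat set list \<Rightarrow> bool" where
  "admissible a b t T \<longleftrightarrow> length T = length a \<and>
     (\<forall>i<length a. T ! i \<subseteq> {0..<a ! i} \<and> card (T ! i) \<le> b ! i) \<and>
     (\<Sum>i<length a. card (T ! i)) = t"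

definition contained_in :: "nat set list \<Rightarrow> nat set list \<Rightarrow> bool" where
  "contained_in T B \<longleftrightarrow> (\<forall>i<length T. T ! i \<subseteq> B ! i)"

text \<open>A generalized covering design GC(a,b,t): a family (list, so repetitions are
  allowed) of blocks covering every admissible tuple; the parameter conditions
  (same length, positive entries, b \<le> a, t \<le> sum b) are part of the notion.\<close>
definition is_GC :: "nat list \<Rightarrow> nat list \<Rightarrow> nat \<Rightarrow> nat set list list \<Rightarrow> bool" where
  "is_GC a b t D \<longleftrightarrow> length a = length b \<and>
     (\<forall>i<length a. 0 < b ! i \<and> b ! i \<le> a ! i) \<and> t \<le> sum_list b \<and>
     (\<forall>B\<in>set D. is_block a b B) \<and>
     (\<forall>T. admissible a b t T \<longrightarrow> (\<exists>B\<in>set D. contained_in T B))"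

end

theory Submission
  imports Defs
begin

text \<open>Pair every block of the first design with every block of the second. An admissible
  tuple for the concatenated parameters splits into two halves of total size at most t; since
  t is at most the sum of each block-size vector, each half can be enlarged to an admissible
  tuple of the corresponding design, hence lies in one of its blocks, and the whole tuple lies
  in the concatenation of the two blocks.\<close>

definition fits :: "nat list \<Rightarrow> nat list \<Rightarrow> nat set list \<Rightarrow> bool" where
  "fits a b T \<longleftrightarrow> length T = length a \<and>
     (\<forall>i<length a. T ! i \<subseteq> {0..<a ! i} \<and> card (T ! i) \<le> b ! i)"

lemma admissible_iff_fits:
  "admissible a b t T \<longleftrightarrow> fits a b T \<and> sum_list (map card T) = t"
  by (auto simp: admissible_def fits_def sum_list_sum_nth atLeast0LessThan)

lemma fits_append_iff:
  assumes "length b1 = length a1" and "length T1 = length a1"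
  shows "fits (a1 @ a2) (b1 @ b2) (T1 @ T2) \<longleftrightarrow> fits a1 b1 T1 \<and> fits a2 b2 T2"
proof -
  have "(\<forall>i<length a1 + length a2. P i) \<longleftrightarrow>
        (\<forall>i<length a1. P i) \<and> (\<forall>i<length a2. P (length a1 + i))" for P
  proof safe
    fix i assume "\<forall>i<length a1. P i" "\<forall>i<length a2. P (length a1 + i)"
      and "i < length a1 + length a2"
    then show "P i"
      by (cases "i < length a1") (auto dest: spec[of _ "i - length a1"])
  qed auto
  then show ?thesis
    using assms by (auto simp: fits_def nth_append)
qed

lemma contained_in_refl: "contained_in T T"
  by (simp add: contained_in_def)

lemma contained_in_trans:
  "contained_in T T' \<Longrightarrow> contained_in T' B \<Longrightarrow> length T \<le> length T' \<Longrightarrow> contained_in T B"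
  unfolding contained_in_def by (meson dual_order.trans less_le_trans)

lemma contained_in_append:
  "length T1 = length B1 \<Longrightarrow> contained_in T1 B1 \<Longrightarrow> contained_in T2 B2 \<Longrightarrow>
   contained_in (T1 @ T2) (B1 @ B2)"
  by (auto simp: contained_in_def nth_append)

lemma is_block_append:
  "length b1 = length a1 \<Longrightarrow> is_block a1 b1 B1 \<Longrightarrow> is_block a2 b2 B2 \<Longrightarrow>
   is_block (a1 @ a2) (b1 @ b2) (B1 @ B2)"
  by (auto simp: is_block_def nth_append)

lemma sum_list_map_card_update:
  "i < length T \<Longrightarrow>
   sum_list (map card (T[i := X])) + card (T ! i) = sum_list (map card T) + card X"
proof (induction T arbitrary: i)
  case (Cons S T)
  then show ?case by (cases i) auto
qed simp

lemma fits_grow: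
  assumes fit: "fits a b T" and lb: "length b = length a"
    and ba: "\<forall>i<length a. b ! i \<le> a ! i"
    and less: "sum_list (map card T) < sum_list b"
  obtains T' where "fits a b T'" "contained_in T T'" "length T' = length T"
    "sum_list (map card T') = Suc (sum_list (map card T))"
proof -
  have "\<exists>i<length a. card (T ! i) < b ! i"
  proof (rule ccontr)
    assume "\<not> ?thesis"
    with fit have "map card T = b"
      by (auto simp: fits_def lb intro!: nth_equalityI) (meson le_antisym not_less)
    with less show False by simp
  qed
  then obtain i where i: "i < length a" "card (T ! i) < b ! i" by blast
  have sub: "T ! i \<subseteq> {0..<a ! i}"
    using fit i by (simp add: fits_def)
  then have fin: "finite (T ! i)"
    using finite_subset by blast
  have "card (T ! i) < card {0..<a ! i}"
    using i ba by (simp add: less_le_trans)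
  then have "\<not> {0..<a ! i} \<subseteq> T ! i"
    using card_mono[OF fin] leD by blast
  then obtain x where x: "x \<in> {0..<a ! i} - T ! i"
    by blast
  define T' where "T' = T[i := insert x (T ! i)]"
  have len: "length T' = length T" and iT: "i < length T"
    using fit i by (auto simp: T'_def fits_def)
  have "card (insert x (T ! i)) = Suc (card (T ! i))"
    using fin x by simp
  then have "sum_list (map card T') = Suc (sum_list (map card T))"
    using sum_list_map_card_update[OF iT, of "insert x (T ! i)"] by (simp add: T'_def)
  moreover have "fits a b T'"
    using fit i x fin by (auto simp: fits_def T'_def nth_list_update)
  moreover have "contained_in T T'"
    using iT by (auto simp: contained_in_def T'_def nth_list_update)
  ultimately show ?thesis using that len by blast
qed

lemma fits_extend_admissible:
  assumes "fits a b T" and "length b = length a" and "\<forall>i<length a. b ! i \<le> a ! i"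
    and "sum_list (map card T) \<le> t" and "t \<le> sum_list b"
  obtains T' where "admissible a b t T'" "contained_in T T'" "length T' = length T"
  using assms
proof (induction "t - sum_list (map card T)" arbitrary: T)
  case 0
  then have "admissible a b t T"
    by (simp add: admissible_iff_fits)
  with 0 show ?case
    by (blast intro: contained_in_refl)
next
  case (Suc d)
  have "sum_list (map card T) < sum_list b"
    using Suc.hyps(2) Suc.prems(6) by linarith
  then obtain T1 where T1: "fits a b T1" "contained_in T T1" "length T1 = length T"
    "sum_list (map card T1) = Suc (sum_list (map card T))"
    by (rule fits_grow[OF Suc.prems(2-4)])
  show ?case
  proof (rule Suc.hyps(1)[OF _ _ T1(1) Suc.prems(3,4) _ Suc.prems(6)])
    fix T' assume T': "admissible a b t T'" "contained_in T1 T'" "length T' = length T1"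
    have "contained_in T T'"
      using contained_in_trans[OF T1(2) T'(2)] T1(3) by simp
    with T' T1(3) show thesis
      using Suc.prems(1) by simp
  qed (use Suc.hyps(2) T1(4) in auto)
qed

lemma is_GC_covers_fits:
  assumes "is_GC a b t D" and "fits a b T" and "sum_list (map card T) \<le> t"
  obtains B where "B \<in> set D" "contained_in T B"
proof -
  from assms(1) have params: "length b = length a" "\<forall>i<length a. b ! i \<le> a ! i" "t \<le> sum_list b"
    and cover: "\<forall>T. admissible a b t T \<longrightarrow> (\<exists>B\<in>set D. contained_in T B)"
    by (auto simp: is_GC_def)
  obtain T' where "admissible a b t T'" "contained_in T T'" "length T' = length T"
    using fits_extend_admissible[OF assms(2) params(1,2) assms(3) params(3)] by blast
  moreover obtain B where "B \<in> set D" "contained_in T' B"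
    using cover \<open>admissible a b t T'\<close> by blast
  ultimately show thesis
    using that contained_in_trans by simp
qed

definition product_design :: "nat set list list \<Rightarrow> nat set list list \<Rightarrow> nat set list list" where
  "product_design D1 D2 = map (\<lambda>(B1, B2). B1 @ B2) (List.product D1 D2)"

lemma length_product_design: "length (product_design D1 D2) = length D1 * length D2"
  by (simp add: product_design_def)

lemma is_GC_product_design:
  assumes G1: "is_GC a1 b1 t D1" and G2: "is_GC a2 b2 t D2"
  shows "is_GC (a1 @ a2) (b1 @ b2) t (product_design D1 D2)"
proof -
  have lb1: "length b1 = length a1" and blocks1: "\<forall>B\<in>set D1. is_block a1 b1 B"
    using G1 by (auto simp: is_GC_def)
  have cover: "\<exists>B\<in>set (product_design D1 D2). contained_in T B"
    if T: "admissible (a1 @ a2) (b1 @ b2) t T" for T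
  proof -
    define T1 T2 where "T1 = take (length a1) T" and "T2 = drop (length a1) T"
    have TT: "T = T1 @ T2" and lT1: "length T1 = length a1"
      using T by (auto simp: T1_def T2_def admissible_def)
    have "fits a1 b1 T1" "fits a2 b2 T2"
        "sum_list (map card T1) + sum_list (map card T2) = t"
      using T fits_append_iff[OF lb1 lT1] by (auto simp: admissible_iff_fits TT)
    then obtain B1 B2 where "B1 \<in> set D1" "contained_in T1 B1" "B2 \<in> set D2" "contained_in T2 B2"
      using is_GC_covers_fits[OF G1, of T1] is_GC_covers_fits[OF G2, of T2] by (metis le_add1 le_add2)
    moreover have "length B1 = length T1"
      using blocks1 \<open>B1 \<in> set D1\<close> lT1 by (simp add: is_block_def)
    ultimately have "B1 @ B2 \<in> set (product_design D1 D2)" "contained_in T (B1 @ B2)"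
      by (auto simp: product_design_def TT intro: contained_in_append)
    then show ?thesis by blast
  qed
  have "\<forall>B\<in>set (product_design D1 D2). is_block (a1 @ a2) (b1 @ b2) B"
    using G1 G2 by (auto simp: product_design_def is_GC_def intro!: is_block_append)
  with cover G1 G2 show ?thesis
    by (auto simp: is_GC_def nth_append)
qed

theorem theorem6p1:
  fixes v k w l :: "nat list" and t b c :: nat
    and D1 D2 :: "nat set list list"
  assumes "length v = length k" and "\<forall>i<length v. 0 < k ! i \<and> k ! i \<le> v ! i"
    and "length w = length l" and "\<forall>i<length w. 0 < l ! i \<and> l ! i \<le> w ! i"
    and "0 < t"
    and "is_GC v k t D1" and "length D1 = b"
    and "is_GC w l t D2" and "length D2 = c"
  shows "\<exists>D. is_GC (v @ w) (k @ l) t D \<and> length D = b * c"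
  using is_GC_product_design[OF assms(6,8)] length_product_design assms(7,9) by blast

end
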